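(* Every acyclic unique sink orientation of the $n$-dimensional cube with $n \geq 4$ is $(n-2)$-nice.
   Context: Let $Q^n = 2^{[n]}$ be the vertex set of the $n$-cube, with $u,v$ adjacent iff $|u\oplus v|=1$; faces are $F_{J,v}=\{u : v\oplus u\subseteq J\}$ for $J\subseteq[n]$. A unique sink orientation (USO) is an orientation of the cube's edges such that every nonempty face has a unique sink (vertex with no outgoing edges within the face); it is acyclic (an AUSO) if it has no directed cycle. The outmap $s_\psi(v)$ is the set of coordinates $j$ such that the edge $\{v,v\oplus\{j\}\}$ is directed away from $v$; the global sink is the vertex $t$ with $s_\psi(t)=\emptyset$. Let $d(v,u)$ be the length of a shortest directed path from $v$ to $u$ ($\infty$ if none). The reachmap is $r_\psi(v)=s_\psi(v)\cup\{j : \exists u \text{ reachable from } v \text{ by a directed path with } j\in s_\psi(u)\}$. A vertex $v$ is $i$-covered by $u$ if $d(v,u)\le i$ and $r_\psi(u)\subsetneq r_\psi(v)$; $\psi$ is $i$-nice if every vertex other than the global sink is $i$-covered by some vertex. *)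

theory Defs
  imports Main
begin

definition cube :: "nat \<Rightarrow> nat set set" where
  "cube n = Pow {1..n}"

definition symdiff :: "nat set \<Rightarrow> nat set \<Rightarrow> nat set" where
  "symdiff u v = (u - v) \<union> (v - u)"

definition adjacent :: "nat \<Rightarrow> nat set \<Rightarrow> nat set \<Rightarrow> bool" where
  "adjacent n u v \<longleftrightarrow> u \<in> cube n \<and> v \<in> cube n \<and> card (symdiff u v) = 1"

definition face :: "nat \<Rightarrow> nat set \<Rightarrow> nat set \<Rightarrow> nat set set" where
  "face n J v = {u \<in> cube n. symdiff v u \<subseteq> J}"

(* An orientation of the n-cube: arc u w means the edge {u,w} is directed from u to w. *)
definition orientation :: "nat \<Rightarrow> (nat set \<Rightarrow> nat set \<Rightarrow> bool) \<Rightarrow> bool" where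
  "orientation n arc \<longleftrightarrow>
     (\<forall>u w. arc u w \<longrightarrow> adjacent n u w) \<and>
     (\<forall>u w. adjacent n u w \<longrightarrow> (arc u w \<longleftrightarrow> \<not> arc w u))"

definition is_sink_in :: "(nat set \<Rightarrow> nat set \<Rightarrow> bool) \<Rightarrow> nat set set \<Rightarrow> nat set \<Rightarrow> bool" where
  "is_sink_in arc F u \<longleftrightarrow> u \<in> F \<and> (\<forall>w\<in>F. \<not> arc u w)"

definition USO :: "nat \<Rightarrow> (nat set \<Rightarrow> nat set \<Rightarrow> bool) \<Rightarrow> bool" where
  "USO n arc \<longleftrightarrow> orientation n arc \<and>
     (\<forall>J v. J \<subseteq> {1..n} \<and> v \<in> cube n \<and> face n J v \<noteq> {} \<longrightarrow>
        (\<exists>!u. is_sink_in arc (face n J v) u))"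

definition arcs :: "(nat set \<Rightarrow> nat set \<Rightarrow> bool) \<Rightarrow> (nat set \<times> nat set) set" where
  "arcs arc = {(u, w). arc u w}"

definition AUSO :: "nat \<Rightarrow> (nat set \<Rightarrow> nat set \<Rightarrow> bool) \<Rightarrow> bool" where
  "AUSO n arc \<longleftrightarrow> USO n arc \<and> (\<forall>v. (v, v) \<notin> (arcs arc)\<^sup>+)"

definition outmap :: "nat \<Rightarrow> (nat set \<Rightarrow> nat set \<Rightarrow> bool) \<Rightarrow> nat set \<Rightarrow> nat set" where
  "outmap n arc v = {j \<in> {1..n}. arc v (symdiff v {j})}"

definition reachmap :: "nat \<Rightarrow> (nat set \<Rightarrow> nat set \<Rightarrow> bool) \<Rightarrow> nat set \<Rightarrow> nat set" where
  "reachmap n arc v = outmap n arc v \<union>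
     {j. \<exists>u. (v, u) \<in> (arcs arc)\<^sup>+ \<and> j \<in> outmap n arc u}"

definition dist_le :: "(nat set \<Rightarrow> nat set \<Rightarrow> bool) \<Rightarrow> nat set \<Rightarrow> nat set \<Rightarrow> nat \<Rightarrow> bool" where
  "dist_le arc v u i \<longleftrightarrow> (\<exists>k\<le>i. (v, u) \<in> (arcs arc) ^^ k)"

definition covered :: "nat \<Rightarrow> (nat set \<Rightarrow> nat set \<Rightarrow> bool) \<Rightarrow> nat \<Rightarrow> nat set \<Rightarrow> nat set \<Rightarrow> bool" where
  "covered n arc i v u \<longleftrightarrow> dist_le arc v u i \<and> reachmap n arc u \<subset> reachmap n arc v"

definition global_sink :: "nat \<Rightarrow> (nat set \<Rightarrow> nat set \<Rightarrow> bool) \<Rightarrow> nat set \<Rightarrow> bool" where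
  "global_sink n arc t \<longleftrightarrow> t \<in> cube n \<and> outmap n arc t = {}"

definition nice :: "nat \<Rightarrow> (nat set \<Rightarrow> nat set \<Rightarrow> bool) \<Rightarrow> nat \<Rightarrow> bool" where
  "nice n arc i \<longleftrightarrow>
     (\<forall>v\<in>cube n. \<not> global_sink n arc v \<longrightarrow> (\<exists>u\<in>cube n. covered n arc i v u))"

end

theory Submission
  imports Defs
begin

text \<open>Let \<open>t\<close> be the global sink. For each direction \<open>c\<close>, the sink of the facet through
  \<open>t \<triangle> {c}\<close> avoiding \<open>c\<close> is a vertex \<open>single_out c\<close> with outmap \<open>{c}\<close>, and \<open>c\<close> lies in the
  reachmap of \<open>x\<close> exactly when \<open>x\<close> reaches \<open>single_out c\<close>. A vertex \<open>u\<close> whose outmap avoids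
  \<open>v \<triangle> u\<close> is the sink of the face they span, hence reached from \<open>v\<close> in \<open>|v \<triangle> u|\<close> steps.
  So a non-sink \<open>v\<close> is covered by \<open>t\<close> if \<open>|v \<triangle> t| \<le> n - 2\<close>, and by \<open>single_out a\<close>
  (\<open>a \<in> v \<triangle> t\<close>) if that vertex is close enough and reaches less. Otherwise all but at most one
  such \<open>a\<close> have \<open>single_out a\<close> adjacent to the antipode \<open>w\<close> of \<open>v\<close>, and a walk through the 2-faces
  at these neighbours ends at a vertex \<open>w \<triangle> {a, c}\<close> with outmap inside \<open>{a, c}\<close>: it lies at
  distance \<open>n - 2\<close> from \<open>v\<close> and misses some direction that \<open>v\<close> reaches.\<close>

lemma symdiff_iff [simp]: "x \<in> symdiff u v \<longleftrightarrow> (x \<in> u \<longleftrightarrow> x \<notin> v)"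
  by (auto simp: symdiff_def)

lemma symdiff_self [simp]: "symdiff u u = {}"
  by (auto simp: symdiff_def)

lemma symdiff_solve:
  assumes "v \<subseteq> I" "x \<subseteq> I" "S \<subseteq> I" "symdiff v x = I - S"
  shows "x = symdiff (I - v) S"
proof (rule set_eqI)
  fix y
  have "y \<in> symdiff v x \<longleftrightarrow> y \<in> I - S"
    using assms(4) by simp
  then show "y \<in> x \<longleftrightarrow> y \<in> symdiff (I - v) S"
    using assms(1-3) by auto
qed

lemma cube_iff: "u \<in> cube n \<longleftrightarrow> u \<subseteq> {1..n}"
  by (simp add: cube_def)

lemma symdiff_subset_cube: "u \<in> cube n \<Longrightarrow> w \<in> cube n \<Longrightarrow> symdiff u w \<subseteq> {1..n}"
  unfolding cube_iff symdiff_def by blast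

lemma symdiff_in_cube: "u \<in> cube n \<Longrightarrow> S \<subseteq> {1..n} \<Longrightarrow> symdiff u S \<in> cube n"
  unfolding cube_iff symdiff_def by blast

lemma finite_symdiff: "u \<in> cube n \<Longrightarrow> w \<in> cube n \<Longrightarrow> finite (symdiff u w)"
  using finite_subset[OF symdiff_subset_cube] by blast

lemma adjacent_iff:
  "adjacent n u w \<longleftrightarrow> u \<in> cube n \<and> (\<exists>c\<in>{1..n}. w = symdiff u {c})"
proof
  assume "adjacent n u w"
  then have u: "u \<in> cube n" and w: "w \<in> cube n" and "card (symdiff u w) = 1"
    unfolding adjacent_def by blast+
  then obtain c where c: "symdiff u w = {c}"
    by (auto simp: card_1_singleton_iff)
  then have "w = symdiff u {c}"
    by (auto simp: set_eq_iff)
  with c u w symdiff_subset_cube show "u \<in> cube n \<and> (\<exists>c\<in>{1..n}. w = symdiff u {c})"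
    by blast
next
  assume "u \<in> cube n \<and> (\<exists>c\<in>{1..n}. w = symdiff u {c})"
  then obtain c where "u \<in> cube n" "c \<in> {1..n}" "w = symdiff u {c}"
    by blast
  moreover have "symdiff u (symdiff u {c}) = {c}"
    by auto
  ultimately show "adjacent n u w"
    by (simp add: adjacent_def symdiff_in_cube)
qed

locale auso =
  fixes n :: nat and arc :: "nat set \<Rightarrow> nat set \<Rightarrow> bool"
  assumes auso: "AUSO n arc"
begin

lemma arcs_iff [simp]: "(x, y) \<in> arcs arc \<longleftrightarrow> arc x y"
  by (simp add: arcs_def)

lemma no_cycle: "(v, v) \<notin> (arcs arc)\<^sup>+"
  using auso unfolding AUSO_def by simp

lemma orientation: "orientation n arc"
  using auso unfolding AUSO_def USO_def by blast

lemma arc_adjacent: "arc u w \<Longrightarrow> adjacent n u w"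
  using orientation unfolding orientation_def by blast

lemma arc_asym: "arc u w \<Longrightarrow> \<not> arc w u"
  using orientation arc_adjacent unfolding orientation_def by metis

lemma face_self: "v \<in> cube n \<Longrightarrow> v \<in> face n J v"
  by (simp add: face_def)

lemma sink_in_face_unique:
  "J \<subseteq> {1..n} \<Longrightarrow> v \<in> cube n \<Longrightarrow> \<exists>!x. is_sink_in arc (face n J v) x"
proof -
  assume "J \<subseteq> {1..n}" "v \<in> cube n"
  moreover have "face n J v \<noteq> {}"
    using face_self[OF \<open>v \<in> cube n\<close>] by blast
  ultimately show ?thesis
    using auso unfolding AUSO_def USO_def by blast
qed

lemma outmap_iff: "c \<in> outmap n arc v \<longleftrightarrow> c \<in> {1..n} \<and> arc v (symdiff v {c})"
  by (simp add: outmap_def)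

lemma outmap_subset: "outmap n arc v \<subseteq> {1..n}"
  by (auto simp: outmap_def)

lemma arc_cube: "arc u w \<Longrightarrow> u \<in> cube n \<and> w \<in> cube n"
  using arc_adjacent by (auto simp: adjacent_def)

lemma arc_outmap:
  assumes "arc u w"
  shows "\<exists>c\<in>outmap n arc u. w = symdiff u {c}"
proof -
  obtain c where "c \<in> {1..n}" "w = symdiff u {c}"
    using assms arc_adjacent adjacent_iff by blast
  with assms show ?thesis
    by (auto simp: outmap_iff)
qed

lemma rtrancl_arcs_cube: "(x, y) \<in> (arcs arc)\<^sup>* \<Longrightarrow> x \<in> cube n \<Longrightarrow> y \<in> cube n"
  by (induction rule: rtrancl_induct) (auto dest: arc_cube)

lemma sink_in_face_iff:
  assumes J: "J \<subseteq> {1..n}" and w: "w \<in> face n J v"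
  shows "is_sink_in arc (face n J v) w \<longleftrightarrow> outmap n arc w \<inter> J = {}"
proof
  assume sink: "is_sink_in arc (face n J v) w"
  show "outmap n arc w \<inter> J = {}"
  proof (rule ccontr)
    assume "outmap n arc w \<inter> J \<noteq> {}"
    then obtain c where c: "c \<in> outmap n arc w" "c \<in> J"
      by blast
    with J w have "symdiff w {c} \<in> face n J v"
      by (auto simp: face_def symdiff_in_cube)
    with c sink show False
      by (auto simp: is_sink_in_def outmap_iff)
  qed
next
  assume out: "outmap n arc w \<inter> J = {}"
  have "\<not> arc w u" if "u \<in> face n J v" for u
  proof
    assume "arc w u"
    then obtain c where c: "c \<in> outmap n arc w" "u = symdiff w {c}"
      using arc_outmap by blast
    have "c \<in> symdiff v w \<or> c \<in> symdiff v u"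
      using c(2) by auto
    with w \<open>u \<in> face n J v\<close> have "c \<in> J"
      by (auto simp: face_def)
    with c out show False
      by blast
  qed
  with w show "is_sink_in arc (face n J v) w"
    by (simp add: is_sink_in_def)
qed

lemma path_to_face_sink:
  assumes "x \<in> cube n" "w \<in> cube n" "outmap n arc w \<inter> symdiff x w = {}"
  shows "(x, w) \<in> (arcs arc) ^^ card (symdiff x w)"
  using assms
proof (induction "card (symdiff x w)" arbitrary: x)
  case 0
  then have "symdiff x w = {}"
    using finite_symdiff by auto
  then have "x = w"
    by (auto simp: set_eq_iff)
  then show ?case
    by simp
next
  case (Suc m)
  define J where "J = symdiff x w"
  have J: "J \<subseteq> {1..n}" and fin: "finite J"
    using Suc symdiff_subset_cube finite_symdiff unfolding J_def by blast+
  have "w \<in> face n J x"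
    using Suc by (auto simp: face_def J_def)
  then have "is_sink_in arc (face n J x) w"
    using sink_in_face_iff[OF J] Suc by (simp add: J_def)
  moreover have "x \<noteq> w"
    using Suc by auto
  ultimately have "\<not> is_sink_in arc (face n J x) x"
    using sink_in_face_unique[OF J \<open>x \<in> cube n\<close>] by blast
  then obtain c where c: "c \<in> outmap n arc x" "c \<in> J"
    using sink_in_face_iff[OF J face_self[OF \<open>x \<in> cube n\<close>]] by blast
  define u where "u = symdiff x {c}"
  have "arc x u"
    using c outmap_iff u_def by blast
  have "symdiff u w = J - {c}"
    using c(2) unfolding u_def J_def by auto
  then have "card (symdiff u w) = m" "outmap n arc w \<inter> symdiff u w = {}"
    using Suc(2,5) c(2) fin unfolding J_def by auto
  then have "(u, w) \<in> (arcs arc) ^^ m"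
    using Suc(1)[of u] arc_cube[OF \<open>arc x u\<close>] \<open>w \<in> cube n\<close> by simp
  then have "(x, w) \<in> (arcs arc) ^^ Suc m"
    using \<open>arc x u\<close> relpow_Suc_I2[of x u] by simp
  then show ?case
    by (simp only: Suc(2))
qed

lemma ex_global_sink: "\<exists>t. t \<in> cube n \<and> outmap n arc t = {}"
proof -
  have "{} \<in> cube n"
    by (simp add: cube_iff)
  then obtain t where t: "is_sink_in arc (face n {1..n} {}) t"
    using sink_in_face_unique by blast
  then have "t \<in> face n {1..n} {}"
    by (simp add: is_sink_in_def)
  then have "t \<in> cube n" "outmap n arc t \<inter> {1..n} = {}"
    using t sink_in_face_iff[of "{1..n}" t "{}"] by (simp_all add: face_def)
  then show ?thesis
    using outmap_subset by blast
qed

lemma reachmap_iff: "c \<in> reachmap n arc x \<longleftrightarrow> (\<exists>y. (x, y) \<in> (arcs arc)\<^sup>* \<and> c \<in> outmap n arc y)"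
  unfolding reachmap_def by (auto dest: rtranclD intro: trancl_into_rtrancl)

lemma reachmap_subset: "reachmap n arc x \<subseteq> {1..n}"
  using outmap_subset by (force simp: reachmap_iff)

lemma outmap_subset_reachmap: "outmap n arc x \<subseteq> reachmap n arc x"
  by (auto simp: reachmap_iff)

lemma reachmap_antimono: "(x, y) \<in> (arcs arc)\<^sup>* \<Longrightarrow> reachmap n arc y \<subseteq> reachmap n arc x"
  by (meson reachmap_iff rtrancl_trans subsetI)

lemma reachmap_subset_successors:
  assumes "outmap n arc x \<subseteq> K"
  shows "reachmap n arc x \<subseteq> K \<union> (\<Union>k\<in>K. reachmap n arc (symdiff x {k}))"
proof
  fix j
  assume "j \<in> reachmap n arc x"
  then obtain y where y: "(x, y) \<in> (arcs arc)\<^sup>*" "j \<in> outmap n arc y"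
    by (auto simp: reachmap_iff)
  from y(1) show "j \<in> K \<union> (\<Union>k\<in>K. reachmap n arc (symdiff x {k}))"
  proof (cases rule: converse_rtranclE)
    case base
    with y(2) assms show ?thesis
      by blast
  next
    case (step x')
    then obtain k where "k \<in> outmap n arc x" "x' = symdiff x {k}"
      using arc_outmap by auto
    with step y(2) assms show ?thesis
      by (auto simp: reachmap_iff)
  qed
qed

lemma covered_by_face_sink:
  assumes "v \<in> cube n" "u \<in> cube n" "outmap n arc u \<inter> symdiff v u = {}"
    and "card (symdiff v u) \<le> k" and "reachmap n arc u \<noteq> reachmap n arc v"
  shows "covered n arc k v u"
proof -
  have path: "(v, u) \<in> (arcs arc) ^^ card (symdiff v u)"
    using path_to_face_sink assms(1-3) .
  then have "reachmap n arc u \<subseteq> reachmap n arc v"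
    using reachmap_antimono relpow_imp_rtrancl by blast
  with path assms(4,5) show ?thesis
    unfolding covered_def dist_le_def by blast
qed

lemma finite_arcs: "finite (arcs arc)"
proof (rule finite_subset)
  show "arcs arc \<subseteq> cube n \<times> cube n"
    using arc_cube by auto
  show "finite (cube n \<times> cube n)"
    by (simp add: cube_def)
qed

lemma acyclic_arcs: "acyclic (arcs arc)"
  using no_cycle by (simp add: acyclic_def)

lemma wf_reverse_reachability: "wf (((arcs arc)\<^sup>+)\<inverse>)"
proof -
  have "wf ((arcs arc)\<inverse>)"
    using finite_acyclic_wf_converse finite_arcs acyclic_arcs by blast
  then show ?thesis
    using wf_trancl by (fastforce simp: trancl_converse)
qed

lemma predecessor_of_single_out:
  assumes "(w, x) \<in> (arcs arc)\<^sup>+" and "outmap n arc x = {a}"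
  obtains c where "c \<noteq> a" "(w, symdiff x {c}) \<in> (arcs arc)\<^sup>*" "c \<in> outmap n arc (symdiff x {c})"
proof -
  obtain p where p: "(w, p) \<in> (arcs arc)\<^sup>*" "arc p x"
    using tranclD2[OF assms(1)] by auto
  then obtain c where c: "c \<in> outmap n arc p" "x = symdiff p {c}"
    using arc_outmap by blast
  then have p_eq: "p = symdiff x {c}"
    by auto
  moreover have "c \<noteq> a"
  proof
    assume "c = a"
    then have "arc x p"
      using assms(2) p_eq by (auto simp: outmap_iff)
    with p(2) arc_asym show False
      by blast
  qed
  ultimately show ?thesis
    using that p(1) c(1) by blast
qed

text \<open>In a 2-face whose sink is \<open>u\<close>, the antipodal vertex is not a sink; if its edge towards
  \<open>u \<triangle> {c}\<close> is incoming, the other one must be outgoing.\<close>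

lemma square_opposite_arc:
  assumes u: "u \<in> cube n" and cd: "c \<in> {1..n}" "d \<in> {1..n}" "c \<noteq> d"
    and sink: "outmap n arc u \<inter> {c, d} = {}"
    and in_arc: "arc (symdiff u {c}) (symdiff u {c, d})"
  shows "arc (symdiff u {c, d}) (symdiff u {d})"
proof (rule ccontr)
  assume no_arc: "\<not> arc (symdiff u {c, d}) (symdiff u {d})"
  let ?y = "symdiff u {c, d}"
  have J: "{c, d} \<subseteq> {1..n}"
    using cd by blast
  have y: "?y \<in> face n {c, d} u"
    using u J by (auto simp: face_def symdiff_in_cube)
  have "symdiff ?y {c} = symdiff u {d}" "symdiff ?y {d} = symdiff u {c}"
    using cd(3) by auto
  then have "outmap n arc ?y \<inter> {c, d} = {}"
    using no_arc in_arc arc_asym by (auto simp: outmap_iff)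
  then have "is_sink_in arc (face n {c, d} u) ?y"
    using sink_in_face_iff[OF J y] by blast
  moreover have "is_sink_in arc (face n {c, d} u) u"
    using sink_in_face_iff[OF J face_self[OF u]] sink by blast
  ultimately have "?y = u"
    using sink_in_face_unique[OF J u] by blast
  then show False
    by (auto simp: set_eq_iff)
qed

text \<open>Walking from a vertex \<open>b \<triangle> {a, c}\<close> through the square at \<open>b \<triangle> {a}\<close>: an outgoing edge in a
  third direction \<open>d\<close> leads on to \<open>b \<triangle> {a, d}\<close>. Acyclicity makes this walk stop at a vertex of
  the same shape whose outmap lies in \<open>{a, c}\<close>.\<close>

lemma two_face_descent:
  assumes b: "b \<in> cube n" and outmap_single: "\<And>a. a \<in> A \<Longrightarrow> outmap n arc (symdiff b {a}) = {a}"
    and a0: "a0 \<in> A" and c0: "c0 \<noteq> a0" "c0 \<in> outmap n arc (symdiff b {a0, c0})"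
  obtains a c where "a \<in> A" "c \<noteq> a" "c \<in> reachmap n arc (symdiff b {a0, c0})"
    "outmap n arc (symdiff b {a, c}) \<subseteq> {a, c}"
    "(symdiff b {a0, c0}, symdiff b {a, c}) \<in> (arcs arc)\<^sup>*"
proof -
  let ?z0 = "symdiff b {a0, c0}"
  define P where "P z \<longleftrightarrow> (\<exists>a c. a \<in> A \<and> c \<noteq> a \<and> c \<in> reachmap n arc ?z0
    \<and> z = symdiff b {a, c} \<and> (?z0, z) \<in> (arcs arc)\<^sup>*)" for z
  have "P ?z0"
    using a0 c0 outmap_subset_reachmap unfolding P_def by blast
  then obtain z where "P z" and maximal: "\<And>z'. (z, z') \<in> (arcs arc)\<^sup>+ \<Longrightarrow> \<not> P z'"
    using wfE_min[OF wf_reverse_reachability, of ?z0 "Collect P"] by auto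
  then obtain a c where ac: "a \<in> A" "c \<noteq> a" "c \<in> reachmap n arc ?z0"
      and z: "z = symdiff b {a, c}" and reach: "(?z0, z) \<in> (arcs arc)\<^sup>*"
    unfolding P_def by blast
  have "outmap n arc z \<subseteq> {a, c}"
  proof
    fix d
    assume d: "d \<in> outmap n arc z"
    show "d \<in> {a, c}"
    proof (rule ccontr)
      assume "d \<notin> {a, c}"
      let ?u = "symdiff b {a}"
      have u_out: "outmap n arc ?u = {a}"
        using outmap_single ac(1) .
      then have "a \<in> {1..n}"
        using outmap_subset by blast
      then have "?u \<in> cube n"
        using b symdiff_in_cube by blast
      have "c \<in> {1..n}" "d \<in> {1..n}"
        using ac(3) d reachmap_subset outmap_subset by blast+
      have shape: "z = symdiff ?u {c}" "symdiff z {d} = symdiff ?u {c, d}"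
          "symdiff ?u {d} = symdiff b {a, d}"
        using z ac(2) \<open>d \<notin> {a, c}\<close> by auto
      have "arc z (symdiff ?u {c, d})"
        using d shape(2) by (simp add: outmap_iff)
      then have "arc (symdiff ?u {c, d}) (symdiff b {a, d})"
        using square_opposite_arc[OF \<open>?u \<in> cube n\<close> \<open>c \<in> {1..n}\<close> \<open>d \<in> {1..n}\<close>] u_out ac(2)
          \<open>d \<notin> {a, c}\<close> shape by auto
      with \<open>arc z (symdiff ?u {c, d})\<close> have step: "(z, symdiff b {a, d}) \<in> (arcs arc)\<^sup>+"
        by (meson arcs_iff r_into_trancl trancl_into_trancl)
      have "d \<in> reachmap n arc ?z0"
        using d outmap_subset_reachmap reachmap_antimono[OF reach] by blast
      moreover have "(?z0, symdiff b {a, d}) \<in> (arcs arc)\<^sup>*"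
        using reach step by (meson trancl_into_rtrancl rtrancl_trans)
      ultimately have "P (symdiff b {a, d})"
        unfolding P_def using ac(1) \<open>d \<notin> {a, c}\<close> by blast
      with maximal step show False
        by blast
    qed
  qed
  with that ac reach z show ?thesis
    by blast
qed

end

locale auso_with_sink = auso +
  fixes t :: "nat set"
  assumes sink_cube: "t \<in> cube n" and outmap_sink: "outmap n arc t = {}"
begin

lemma reachmap_sink: "reachmap n arc t = {}"
  using reachmap_subset_successors[of t "{}"] outmap_sink by simp

lemma global_sink_unique:
  assumes "x \<in> cube n" "outmap n arc x = {}"
  shows "x = t"
proof -
  have J: "{1..n} \<subseteq> {1..n}"
    by (rule subset_refl)
  have "x \<in> face n {1..n} t"
    using assms(1) symdiff_subset_cube[OF sink_cube] by (simp add: face_def)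
  then have "is_sink_in arc (face n {1..n} t) x"
    using sink_in_face_iff[OF J] assms(2) by simp
  moreover have "is_sink_in arc (face n {1..n} t) t"
    using sink_in_face_iff[OF J face_self[OF sink_cube]] outmap_sink by simp
  ultimately show ?thesis
    using sink_in_face_unique[OF J sink_cube] by blast
qed

text \<open>The sink of the facet opposite to \<open>t\<close> in direction \<open>c\<close> is not \<open>t\<close>, so its outmap is
  exactly \<open>{c}\<close>.\<close>

lemma ex_single_out:
  assumes c: "c \<in> {1..n}"
  shows "\<exists>x. x \<in> cube n \<and> outmap n arc x = {c} \<and> c \<in> symdiff x t"
proof -
  define J where "J = {1..n} - {c}"
  have J: "J \<subseteq> {1..n}"
    unfolding J_def by blast
  have "symdiff t {c} \<in> cube n"
    using symdiff_in_cube[OF sink_cube] c by blast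
  then obtain x where x: "is_sink_in arc (face n J (symdiff t {c})) x"
    using sink_in_face_unique[OF J] by blast
  then have x_face: "x \<in> face n J (symdiff t {c})"
    by (simp add: is_sink_in_def)
  then have "x \<in> cube n" and side: "c \<in> symdiff x t"
    by (auto simp: face_def J_def)
  have "outmap n arc x \<subseteq> {c}"
    using sink_in_face_iff[OF J x_face] x outmap_subset unfolding J_def by blast
  moreover have "outmap n arc x \<noteq> {}"
    using global_sink_unique \<open>x \<in> cube n\<close> side by auto
  ultimately show ?thesis
    using \<open>x \<in> cube n\<close> side by blast
qed

definition single_out :: "nat \<Rightarrow> nat set" where
  "single_out c = (SOME x. x \<in> cube n \<and> outmap n arc x = {c} \<and> c \<in> symdiff x t)"

lemma single_out:
  assumes "c \<in> {1..n}"
  shows single_out_cube: "single_out c \<in> cube n"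
    and outmap_single_out: "outmap n arc (single_out c) = {c}"
    and single_out_side: "c \<in> symdiff (single_out c) t"
  using someI_ex[OF ex_single_out[OF assms]] unfolding single_out_def by blast+

text \<open>Any vertex reached with an outgoing \<open>c\<close>-edge can continue, on the side of \<open>c\<close> opposite to
  \<open>t\<close>, down to \<open>single_out c\<close>, the sink of that facet.\<close>

lemma reachmap_iff_reaches_single_out:
  assumes x: "x \<in> cube n" and c: "c \<in> {1..n}"
  shows "c \<in> reachmap n arc x \<longleftrightarrow> (x, single_out c) \<in> (arcs arc)\<^sup>*"
proof
  assume "c \<in> reachmap n arc x"
  then obtain y where y: "(x, y) \<in> (arcs arc)\<^sup>*" "c \<in> outmap n arc y"
    by (auto simp: reachmap_iff)
  then have y_arc: "arc y (symdiff y {c})"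
    by (simp add: outmap_iff)
  obtain z where z: "(x, z) \<in> (arcs arc)\<^sup>*" "z \<in> cube n" "c \<in> symdiff z t"
  proof (cases "c \<in> symdiff y t")
    case True
    then show ?thesis
      using that y(1) rtrancl_arcs_cube[OF y(1) x] by blast
  next
    case False
    then have "c \<in> symdiff (symdiff y {c}) t"
      by auto
    moreover have "(x, symdiff y {c}) \<in> (arcs arc)\<^sup>*"
      using y(1) y_arc by (simp add: rtrancl_into_rtrancl)
    ultimately show ?thesis
      using that arc_cube[OF y_arc] by blast
  qed
  then have "outmap n arc (single_out c) \<inter> symdiff z (single_out c) = {}"
    using outmap_single_out[OF c] single_out_side[OF c] by auto
  then have "(z, single_out c) \<in> (arcs arc)\<^sup>*"
    using path_to_face_sink[OF z(2) single_out_cube[OF c]] relpow_imp_rtrancl by blast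
  with z(1) show "(x, single_out c) \<in> (arcs arc)\<^sup>*"
    by (rule rtrancl_trans)
next
  assume "(x, single_out c) \<in> (arcs arc)\<^sup>*"
  with outmap_single_out[OF c] show "c \<in> reachmap n arc x"
    by (auto simp: reachmap_iff)
qed

lemma single_out_not_reached_after:
  assumes c: "c \<in> {1..n}"
  shows "c \<notin> reachmap n arc (symdiff (single_out c) {c})"
proof
  let ?y = "symdiff (single_out c) {c}"
  have arc: "arc (single_out c) ?y"
    using outmap_single_out[OF c] outmap_iff by blast
  assume "c \<in> reachmap n arc ?y"
  then have "(?y, single_out c) \<in> (arcs arc)\<^sup>*"
    using reachmap_iff_reaches_single_out[OF _ c] arc_cube[OF arc] by blast
  with arc have "(single_out c, single_out c) \<in> (arcs arc)\<^sup>+"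
    by (simp add: rtrancl_into_trancl2)
  with no_cycle show False
    by blast
qed

lemma covered_by_sink:
  assumes "v \<in> cube n" "outmap n arc v \<noteq> {}" "card (symdiff v t) \<le> k"
  shows "covered n arc k v t"
proof -
  have "reachmap n arc v \<noteq> {}"
    using assms(2) outmap_subset_reachmap by blast
  then show ?thesis
    using covered_by_face_sink[OF assms(1) sink_cube] assms(3) outmap_sink reachmap_sink by simp
qed

lemma single_out_face_sink:
  assumes v: "v \<in> cube n" and a: "a \<in> symdiff v t"
  shows "a \<in> {1..n}" and "outmap n arc (single_out a) \<inter> symdiff v (single_out a) = {}"
proof -
  show a_dir: "a \<in> {1..n}"
    using a symdiff_subset_cube[OF v sink_cube] by blast
  then show "outmap n arc (single_out a) \<inter> symdiff v (single_out a) = {}"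
    using a single_out_side outmap_single_out by auto
qed

lemma dir_in_reachmap:
  assumes v: "v \<in> cube n" and a: "a \<in> symdiff v t"
  shows "a \<in> reachmap n arc v"
  using reachmap_iff_reaches_single_out[OF v] single_out_face_sink[OF v a]
    path_to_face_sink[OF v single_out_cube] relpow_imp_rtrancl by blast

end

locale far_vertex = auso_with_sink +
  fixes v :: "nat set"
  assumes v_cube: "v \<in> cube n" and n_ge_4: "4 \<le> n"
    and far_from_sink: "n - 1 \<le> card (symdiff v t)"
    and far_from_single_outs: "\<And>a. a \<in> symdiff v t \<Longrightarrow>
      reachmap n arc (single_out a) \<noteq> reachmap n arc v \<Longrightarrow> n - 2 < card (symdiff v (single_out a))"
begin

definition antipode :: "nat set" where
  "antipode = {1..n} - v"

definition shrinking :: "nat set" where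
  "shrinking = {a \<in> symdiff v t. reachmap n arc (single_out a) \<noteq> reachmap n arc v}"

lemma dirs_subset: "symdiff v t \<subseteq> {1..n}"
  using symdiff_subset_cube[OF v_cube sink_cube] .

lemma antipode_cube: "antipode \<in> cube n"
  by (simp add: antipode_def cube_iff)

lemma card_dirs_ge_3: "3 \<le> card (symdiff v t)"
  using far_from_sink n_ge_4 by linarith

lemma single_out_shrinking:
  assumes a: "a \<in> shrinking"
  shows "single_out a = symdiff antipode {a}"
proof -
  have aD: "a \<in> symdiff v t" and ne: "reachmap n arc (single_out a) \<noteq> reachmap n arc v"
    using a unfolding shrinking_def by blast+
  note a_dir = single_out_face_sink(1)[OF v_cube aD]
  let ?S = "symdiff v (single_out a)"
  have "a \<notin> ?S"
    using single_out_face_sink(2)[OF v_cube aD] outmap_single_out[OF a_dir] by blast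
  then have sub: "?S \<subseteq> {1..n} - {a}"
    using symdiff_subset_cube[OF v_cube single_out_cube[OF a_dir]] by blast
  moreover have "card ({1..n} - {a}) \<le> card ?S"
    using far_from_single_outs[OF aD ne] a_dir by simp
  ultimately have "?S = {1..n} - {a}"
    using card_seteq[OF _ sub] by simp
  then show ?thesis
    using symdiff_solve[of v "{1..n}" "single_out a" "{a}"] v_cube single_out_cube[OF a_dir] a_dir
    unfolding antipode_def cube_iff by blast
qed

lemma shrinking_subset: "shrinking \<subseteq> {1..n}"
  using dirs_subset unfolding shrinking_def by blast

lemma outmap_antipode_flip:
  assumes "a \<in> shrinking"
  shows "outmap n arc (symdiff antipode {a}) = {a}"
  using outmap_single_out[of a] single_out_shrinking[OF assms] assms shrinking_subset by auto

lemma nonshrinking_unique: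
  assumes f: "f \<in> symdiff v t - shrinking" and f': "f' \<in> symdiff v t - shrinking"
  shows "f = f'"
proof -
  have dirs: "f \<in> {1..n}" "f' \<in> {1..n}"
    using f f' dirs_subset by blast+
  have "reachmap n arc (single_out f) = reachmap n arc v" "reachmap n arc (single_out f') = reachmap n arc v"
    using f f' unfolding shrinking_def by blast+
  moreover have "f \<in> reachmap n arc v" "f' \<in> reachmap n arc v"
    using f f' dir_in_reachmap[OF v_cube] by blast+
  ultimately have "f' \<in> reachmap n arc (single_out f)" "f \<in> reachmap n arc (single_out f')"
    by simp_all
  then have "(single_out f, single_out f') \<in> (arcs arc)\<^sup>*" "(single_out f', single_out f) \<in> (arcs arc)\<^sup>*"
    using reachmap_iff_reaches_single_out[OF single_out_cube[OF dirs(1)] dirs(2)]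
      reachmap_iff_reaches_single_out[OF single_out_cube[OF dirs(2)] dirs(1)] by blast+
  then have "single_out f = single_out f'"
    by (rule antisymD[OF acyclic_impl_antisym_rtrancl[OF acyclic_arcs]])
  then have "{f} = {f'}"
    using outmap_single_out dirs by metis
  then show ?thesis
    by blast
qed

lemma two_shrinking:
  obtains a a' where "a \<in> shrinking" "a' \<in> shrinking" "a \<noteq> a'"
proof -
  have fin: "finite (symdiff v t)"
    using dirs_subset finite_subset by blast
  then have "card (symdiff v t - shrinking) \<le> 1"
    using nonshrinking_unique card_le_Suc0_iff_eq[of "symdiff v t - shrinking"] by simp
  moreover have "symdiff v t = shrinking \<union> (symdiff v t - shrinking)"
    unfolding shrinking_def by blast
  then have "card (symdiff v t) \<le> card shrinking + card (symdiff v t - shrinking)"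
    by (metis card_Un_le)
  ultimately have "\<not> card shrinking \<le> Suc 0"
    using card_dirs_ge_3 by linarith
  moreover have "finite shrinking"
    using shrinking_subset finite_subset by blast
  ultimately show ?thesis
    using that card_le_Suc0_iff_eq by blast
qed

lemma antipode_flip_outside:
  assumes e: "e \<in> {1..n}" "e \<notin> symdiff v t"
  shows "symdiff antipode {e} = t"
proof -
  have sub: "symdiff v t \<subseteq> {1..n} - {e}"
    using e dirs_subset by blast
  moreover have "card ({1..n} - {e}) \<le> card (symdiff v t)"
    using far_from_sink e by simp
  ultimately have "symdiff v t = {1..n} - {e}"
    using card_seteq[OF _ sub] by blast
  then show ?thesis
    using symdiff_solve[of v "{1..n}" t "{e}"] v_cube sink_cube e unfolding antipode_def cube_iff
    by blast
qed

lemma shrinking_not_in_reachmap_antipode: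
  assumes a: "a \<in> shrinking"
  shows "a \<notin> reachmap n arc antipode"
proof -
  have "symdiff (single_out a) {a} = antipode"
    using single_out_shrinking[OF a] by auto
  then show ?thesis
    using single_out_not_reached_after a shrinking_subset by (metis subsetD)
qed

lemma reachmap_antipode_flip:
  assumes c: "c \<in> {1..n}" "c \<notin> symdiff v t - shrinking"
  shows "reachmap n arc (symdiff antipode {c}) \<subseteq> {c} \<union> reachmap n arc antipode"
proof (cases "c \<in> shrinking")
  case True
  have "symdiff (symdiff antipode {c}) {c} = antipode"
    by auto
  then show ?thesis
    using reachmap_subset_successors[of "symdiff antipode {c}" "{c}"] outmap_antipode_flip[OF True]
    by simp
next
  case False
  with c have "symdiff antipode {c} = t"
    using antipode_flip_outside by blast
  then show ?thesis
    using reachmap_sink by simp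
qed

lemma corner_reachmap_ne:
  assumes a: "a \<in> shrinking" and c: "c \<in> {1..n}" "c \<notin> symdiff v t - shrinking" "c \<noteq> a"
    and out: "outmap n arc (symdiff antipode {a, c}) \<subseteq> {a, c}"
    and avoid: "reachmap n arc (symdiff antipode {a, c}) \<inter> (symdiff v t - shrinking) = {}"
  shows "reachmap n arc (symdiff antipode {a, c}) \<noteq> reachmap n arc v"
proof -
  let ?z = "symdiff antipode {a, c}"
  have a_dir: "a \<in> {1..n}" and a_out: "a \<notin> symdiff v t - shrinking"
    using a shrinking_subset by blast+
  have "symdiff ?z {a} = symdiff antipode {c}" "symdiff ?z {c} = symdiff antipode {a}"
    using c(3) by auto
  then have "reachmap n arc ?z \<subseteq> {a, c} \<union> reachmap n arc antipode"
    using reachmap_subset_successors[OF out] reachmap_antipode_flip[OF c(1,2)]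
      reachmap_antipode_flip[OF a_dir a_out] by auto
  moreover obtain g where "g \<in> symdiff v t" "g \<notin> reachmap n arc ?z"
  proof (cases "shrinking \<subseteq> {a, c}")
    case True
    have "\<not> symdiff v t \<subseteq> {a, c}"
    proof
      assume "symdiff v t \<subseteq> {a, c}"
      then have "card (symdiff v t) \<le> card {a, c}"
        by (simp add: card_mono)
      also have "\<dots> = 2"
        using c(3) by simp
      finally show False
        using card_dirs_ge_3 by simp
    qed
    with True obtain f where "f \<in> symdiff v t - shrinking"
      by blast
    with avoid that show ?thesis
      by blast
  next
    case False
    then obtain g where "g \<in> shrinking" "g \<notin> {a, c}"
      by blast
    with \<open>reachmap n arc ?z \<subseteq> {a, c} \<union> reachmap n arc antipode\<close> that show ?thesis
      using shrinking_not_in_reachmap_antipode unfolding shrinking_def by blast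
  qed
  ultimately show ?thesis
    using dir_in_reachmap[OF v_cube] by blast
qed

lemma corner_covers:
  assumes a: "a \<in> shrinking" and c: "c \<in> {1..n}" "c \<notin> symdiff v t - shrinking" "c \<noteq> a"
    and out: "outmap n arc (symdiff antipode {a, c}) \<subseteq> {a, c}"
    and avoid: "reachmap n arc (symdiff antipode {a, c}) \<inter> (symdiff v t - shrinking) = {}"
  shows "covered n arc (n - 2) v (symdiff antipode {a, c})"
proof -
  let ?z = "symdiff antipode {a, c}"
  have ac: "{a, c} \<subseteq> {1..n}"
    using a c shrinking_subset by blast
  have dist: "symdiff v ?z = {1..n} - {a, c}"
    using v_cube ac unfolding antipode_def cube_iff by auto
  then have "card (symdiff v ?z) = n - 2"
    using ac c(3) by (simp add: card_Diff_subset)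
  moreover have "outmap n arc ?z \<inter> symdiff v ?z = {}"
    using out dist by blast
  ultimately show ?thesis
    using covered_by_face_sink[OF v_cube symdiff_in_cube[OF antipode_cube ac]]
      corner_reachmap_ne[OF a c out avoid] by simp
qed

lemma start_corner_below:
  assumes w: "w \<in> cube n" and reach: "shrinking \<subseteq> reachmap n arc w"
    and avoid: "reachmap n arc w \<inter> (symdiff v t - shrinking) = {}"
  obtains a c where "a \<in> shrinking" "c \<noteq> a" "c \<in> outmap n arc (symdiff antipode {a, c})"
    "reachmap n arc (symdiff antipode {a, c}) \<inter> (symdiff v t - shrinking) = {}"
proof -
  obtain a a' where a: "a \<in> shrinking" "a' \<in> shrinking" "a \<noteq> a'"
    using two_shrinking by blast
  have a_dir: "a \<in> {1..n}" "a \<notin> symdiff v t - shrinking"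
    using a(1) shrinking_subset by blast+
  have "w \<noteq> single_out a"
  proof
    assume "w = single_out a"
    then have "a' \<in> reachmap n arc (symdiff antipode {a})"
      using reach a(2) single_out_shrinking[OF a(1)] by auto
    then show False
      using reachmap_antipode_flip[OF a_dir] shrinking_not_in_reachmap_antipode[OF a(2)] a(3) by blast
  qed
  moreover have "(w, single_out a) \<in> (arcs arc)\<^sup>*"
    using reachmap_iff_reaches_single_out[OF w a_dir(1)] reach a(1) by blast
  ultimately have path: "(w, single_out a) \<in> (arcs arc)\<^sup>+"
    by (meson rtranclD)
  have "outmap n arc (single_out a) = {a}"
    using outmap_single_out a_dir by blast
  then obtain c where c: "c \<noteq> a" "(w, symdiff (single_out a) {c}) \<in> (arcs arc)\<^sup>*"
      "c \<in> outmap n arc (symdiff (single_out a) {c})"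
    using predecessor_of_single_out[OF path] by blast
  have eq: "symdiff (single_out a) {c} = symdiff antipode {a, c}"
    using single_out_shrinking[OF a(1)] c(1) by auto
  then have "reachmap n arc (symdiff antipode {a, c}) \<subseteq> reachmap n arc w"
    using reachmap_antimono[OF c(2)] by simp
  then have "reachmap n arc (symdiff antipode {a, c}) \<inter> (symdiff v t - shrinking) = {}"
    using avoid by blast
  then show ?thesis
    using that[OF a(1) c(1)] c(3) eq by simp
qed

text \<open>If some \<open>f\<close> is not shrinking, \<open>single_out f\<close> reaches everything \<open>v\<close> does, while its
  \<open>f\<close>-successor can no longer reach \<open>f\<close>.\<close>

lemma start_corner:
  obtains a c where "a \<in> shrinking" "c \<noteq> a" "c \<in> outmap n arc (symdiff antipode {a, c})"
    "reachmap n arc (symdiff antipode {a, c}) \<inter> (symdiff v t - shrinking) = {}"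
proof (cases "symdiff v t - shrinking = {}")
  case True
  have "shrinking \<subseteq> reachmap n arc v"
    using dir_in_reachmap[OF v_cube] unfolding shrinking_def by blast
  with True show ?thesis
    using start_corner_below[OF v_cube] that by blast
next
  case False
  then obtain f where f: "f \<in> symdiff v t - shrinking"
    by blast
  then have f_dir: "f \<in> {1..n}" and "symdiff v t - shrinking = {f}"
    using dirs_subset nonshrinking_unique by blast+
  let ?y = "symdiff (single_out f) {f}"
  have "?y \<in> cube n"
    using symdiff_in_cube[OF single_out_cube] f_dir by blast
  moreover have "reachmap n arc ?y \<inter> (symdiff v t - shrinking) = {}"
    using single_out_not_reached_after[OF f_dir] \<open>symdiff v t - shrinking = {f}\<close> by simp
  moreover have "shrinking \<subseteq> reachmap n arc ?y"
  proof
    fix g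
    assume g: "g \<in> shrinking"
    then have "g \<in> reachmap n arc (single_out f)"
      using f dir_in_reachmap[OF v_cube] unfolding shrinking_def by auto
    moreover have "g \<noteq> f"
      using f g by blast
    ultimately show "g \<in> reachmap n arc ?y"
      using reachmap_subset_successors[of "single_out f" "{f}"] outmap_single_out[OF f_dir] by auto
  qed
  ultimately show ?thesis
    using start_corner_below that by blast
qed

theorem far_vertex_covered: "\<exists>u\<in>cube n. covered n arc (n - 2) v u"
proof -
  obtain a0 c0 where a0: "a0 \<in> shrinking" and c0: "c0 \<noteq> a0"
      "c0 \<in> outmap n arc (symdiff antipode {a0, c0})"
      and avoid: "reachmap n arc (symdiff antipode {a0, c0}) \<inter> (symdiff v t - shrinking) = {}"
    using start_corner by blast
  obtain a c where a: "a \<in> shrinking" and c: "c \<noteq> a" "c \<in> reachmap n arc (symdiff antipode {a0, c0})"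
      and out: "outmap n arc (symdiff antipode {a, c}) \<subseteq> {a, c}"
      and reach: "(symdiff antipode {a0, c0}, symdiff antipode {a, c}) \<in> (arcs arc)\<^sup>*"
    using two_face_descent[OF antipode_cube outmap_antipode_flip a0 c0] .
  have c_dir: "c \<in> {1..n}" "c \<notin> symdiff v t - shrinking"
    using c(2) avoid reachmap_subset by blast+
  have "reachmap n arc (symdiff antipode {a, c}) \<inter> (symdiff v t - shrinking) = {}"
    using avoid reachmap_antimono[OF reach] by blast
  then have "covered n arc (n - 2) v (symdiff antipode {a, c})"
    using corner_covers[OF a c_dir c(1) out] by blast
  moreover have "{a, c} \<subseteq> {1..n}"
    using a c_dir(1) shrinking_subset by blast
  ultimately show ?thesis
    using symdiff_in_cube[OF antipode_cube] by blast
qed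

end

context auso_with_sink
begin

theorem nonsink_covered:
  assumes n: "4 \<le> n" and v: "v \<in> cube n" and nonsink: "outmap n arc v \<noteq> {}"
  shows "\<exists>u\<in>cube n. covered n arc (n - 2) v u"
proof (cases "card (symdiff v t) \<le> n - 2")
  case True
  then show ?thesis
    using covered_by_sink[OF v nonsink] sink_cube by blast
next
  case far_sink: False
  show ?thesis
  proof (cases "\<exists>a\<in>symdiff v t. reachmap n arc (single_out a) \<noteq> reachmap n arc v
      \<and> card (symdiff v (single_out a)) \<le> n - 2")
    case True
    then obtain a where a: "a \<in> symdiff v t" "reachmap n arc (single_out a) \<noteq> reachmap n arc v"
        "card (symdiff v (single_out a)) \<le> n - 2"
      by blast
    then have "covered n arc (n - 2) v (single_out a)"
      using covered_by_face_sink[OF v single_out_cube single_out_face_sink(2)[OF v a(1)]]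
        single_out_face_sink(1)[OF v a(1)] by blast
    then show ?thesis
      using single_out_cube single_out_face_sink(1)[OF v a(1)] by blast
  next
    case False
    interpret far_vertex n arc t v
      using n v far_sink False by unfold_locales auto
    show ?thesis
      by (rule far_vertex_covered)
  qed
qed

end

theorem theorem13:
  fixes n :: nat and arc :: "nat set \<Rightarrow> nat set \<Rightarrow> bool"
  assumes "n \<ge> 4" and "AUSO n arc"
  shows "nice n arc (n - 2)"
proof -
  interpret auso n arc
    using assms(2) by (rule auso.intro)
  obtain t where "t \<in> cube n" "outmap n arc t = {}"
    using ex_global_sink by blast
  then interpret auso_with_sink n arc t
    by unfold_locales
  show ?thesis
    unfolding nice_def global_sink_def using nonsink_covered assms(1) by blast
qed

end
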